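(* $\mathrm{Sort}(\mathrm{SC}_{\underline{12}3})$ is not a permutation class.
   Context: $\mathfrak S_n$ is the set of permutations of $\{1,\dots,n\}$. A permutation $\pi$ contains a (classical) permutation $\tau$ if some subsequence of $\pi$ has the same relative order as $\tau$. A permutation class is a set $\Pi$ of permutations such that every permutation contained in some $\pi\in\Pi$ is also in $\Pi$. A vincular pattern is a permutation with some entries underlined; a sequence contains it if it has a subsequence with the same relative order in which entries corresponding to adjacent underlined entries occupy consecutive positions. An occurrence of $\underline{12}3$ is $a_j a_{j+1} a_l$ with $l>j+1$ and $a_j<a_{j+1}<a_l$. For a pattern $\sigma$, the map $\mathrm{SC}_\sigma$ acts on $\tau$: read entries left to right; when the next entry $x$ is read, if pushing $x$ yields a stack whose entries read top to bottom (stack adjacency = consecutive positions) avoid $\sigma$, push $x$; otherwise pop the top stack entry to the output and repeat. At the end pop all remaining entries; the output is $\mathrm{SC}_\sigma(\tau)$. West's stack-sorting map is $s=\mathrm{SC}_{21}$. $\mathrm{Sort}_n(\mathrm{SC}_\sigma)=\{\tau\in\mathfrak S_n : s(\mathrm{SC}_\sigma(\tau))=12\cdots n\}$ and $\mathrm{Sort}(\mathrm{SC}_\sigma)=\bigcup_{n\ge1}\mathrm{Sort}_n(\mathrm{SC}_\sigma)$. *)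

theory Defs
  imports Main
begin

definition perms :: "nat \<Rightarrow> nat list set" where
  "perms n = {xs. length xs = n \<and> distinct xs \<and> set xs = {1..n}}"

definition order_iso :: "nat list \<Rightarrow> nat list \<Rightarrow> bool" where
  "order_iso a p \<longleftrightarrow> length a = length p \<and>
     (\<forall>i < length p. \<forall>j < length p. (a ! i < a ! j \<longleftrightarrow> p ! i < p ! j))"

text \<open>A vincular pattern is a pair (p, U): the pattern p, and U the set of indices i
  (0-based) such that entries i and i+1 of p are underlined and adjacent, i.e. their
  occurrences must be at consecutive positions.\<close>
definition contains_vinc :: "nat list \<Rightarrow> nat list \<times> nat set \<Rightarrow> bool" where
  "contains_vinc w pat \<longleftrightarrow> (case pat of (p, U) \<Rightarrow>
     (\<exists>is. length is = length p \<and> sorted_wrt (<) is \<and> (\<forall>k\<in>set is. k < length w) \<and>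
          order_iso (map (\<lambda>k. w ! k) is) p \<and>
          (\<forall>i\<in>U. Suc i < length p \<longrightarrow> is ! Suc i = Suc (is ! i))))"

definition contains :: "nat list \<Rightarrow> nat list \<Rightarrow> bool" where
  "contains w p \<longleftrightarrow> contains_vinc w (p, {})"

text \<open>The stack is a list whose head is the top;
  it is thus read top to bottom.  If the stack is empty
  the entry is pushed (a one-entry stack avoids every pattern of length at least 2).\<close>
function sc_aux :: "(nat list \<Rightarrow> bool) \<Rightarrow> nat list \<Rightarrow> nat list \<Rightarrow> nat list" where
  "sc_aux P [] st = st"
| "sc_aux P (x # xs) st =
     (if st = [] \<or> P (x # st) then sc_aux P xs (x # st)
      else hd st # sc_aux P (x # xs) (tl st))"
  by pat_completeness auto
termination
  by (relation "measure (\<lambda>(P, xs, st). 2 * length xs + length st)") (auto simp: neq_Nil_conv)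

definition SC :: "nat list \<times> nat set \<Rightarrow> nat list \<Rightarrow> nat list" where
  "SC \<sigma> \<tau> = sc_aux (\<lambda>st. \<not> contains_vinc st \<sigma>) \<tau> []"

definition west_s :: "nat list \<Rightarrow> nat list" where
  "west_s = SC ([2, 1], {})"

definition Sort_n :: "nat list \<times> nat set \<Rightarrow> nat \<Rightarrow> nat list set" where
  "Sort_n \<sigma> n = {\<tau> \<in> perms n. west_s (SC \<sigma> \<tau>) = [1..<Suc n]}"

definition Sort :: "nat list \<times> nat set \<Rightarrow> nat list set" where
  "Sort \<sigma> = (\<Union>n\<in>{1..}. Sort_n \<sigma> n)"

definition perm_class :: "nat list set \<Rightarrow> bool" where
  "perm_class \<Pi> \<longleftrightarrow> \<Pi> \<subseteq> (\<Union>n\<in>{1..}. perms n) \<and>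
     (\<forall>\<pi>\<in>\<Pi>. \<forall>n\<ge>1. \<forall>\<tau>\<in>perms n. contains \<pi> \<tau> \<longrightarrow> \<tau> \<in> \<Pi>)"

definition pat_12_3 :: "nat list \<times> nat set" where
  "pat_12_3 = ([1, 2, 3], {0})"

end

theory Submission
  imports Defs
begin

text \<open>The permutation 4132 lies in the sort set: SC pushes 4, 1, 3, but pushing 2 would
  create the stack 2314, which contains the vincular pattern 12-3, so 3 is popped first
  and the output 3214 is then sorted by s.  Its pattern 132, however, is not: the stack
  never sees 12-3, so SC outputs 231, which s sends to 213.\<close>

lemma contains_vinc_21_iff_not_sorted:
  "contains_vinc w ([2, 1], {}) \<longleftrightarrow> \<not> sorted w"
proof
  assume "contains_vinc w ([2, 1], {})"
  then obtain i j where "i < j" "j < length w" "w ! j < w ! i"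
    by (auto simp: contains_vinc_def order_iso_def length_Suc_conv numeral_eq_Suc All_less_Suc)
  then show "\<not> sorted w"
    by (auto simp: sorted_iff_nth_mono_less not_le)
next
  assume "\<not> sorted w"
  then obtain i j where "i < j" "j < length w" "w ! j < w ! i"
    by (auto simp: sorted_iff_nth_mono_less not_le)
  then show "contains_vinc w ([2, 1], {})"
    unfolding contains_vinc_def
    by (auto intro!: exI[of _ "[i, j]"] simp: order_iso_def All_less_Suc numeral_eq_Suc)
qed

lemma contains_vinc_12_3_iff:
  "contains_vinc w pat_12_3 \<longleftrightarrow>
     (\<exists>j l. Suc j < l \<and> l < length w \<and> w ! j < w ! Suc j \<and> w ! Suc j < w ! l)"
proof
  assume "contains_vinc w pat_12_3"
  then show "\<exists>j l. Suc j < l \<and> l < length w \<and> w ! j < w ! Suc j \<and> w ! Suc j < w ! l"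
    by (fastforce simp: contains_vinc_def pat_12_3_def order_iso_def length_Suc_conv numeral_eq_Suc All_less_Suc)
next
  assume "\<exists>j l. Suc j < l \<and> l < length w \<and> w ! j < w ! Suc j \<and> w ! Suc j < w ! l"
  then obtain j l where "Suc j < l" "l < length w" "w ! j < w ! Suc j" "w ! Suc j < w ! l"
    by blast
  then show "contains_vinc w pat_12_3"
    unfolding contains_vinc_def pat_12_3_def
    by (auto intro!: exI[of _ "[j, Suc j, l]"] simp: order_iso_def All_less_Suc numeral_eq_Suc)
qed

lemma not_contains_vinc_12_3_singleton: "\<not> contains_vinc [a] pat_12_3"
  by (simp add: contains_vinc_12_3_iff)

text \<open>With this recursion and the singleton case, simp decides the push test on
  concrete stacks and hence runs SC on concrete inputs.\<close>

lemma contains_vinc_12_3_Cons_Cons: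
  "contains_vinc (a # b # w) pat_12_3 \<longleftrightarrow>
     a < b \<and> (\<exists>x\<in>set w. b < x) \<or> contains_vinc (b # w) pat_12_3"
proof
  assume "contains_vinc (a # b # w) pat_12_3"
  then obtain j l where jl: "Suc j < l" "l < length (a # b # w)"
    "(a # b # w) ! j < (a # b # w) ! Suc j" "(a # b # w) ! Suc j < (a # b # w) ! l"
    unfolding contains_vinc_12_3_iff by blast
  show "a < b \<and> (\<exists>x\<in>set w. b < x) \<or> contains_vinc (b # w) pat_12_3"
  proof (cases j)
    case 0
    with jl have "w ! (l - 2) \<in> set w" "b < w ! (l - 2)"
      by (auto simp: numeral_eq_Suc nth_Cons split: nat.splits)
    with jl 0 show ?thesis by auto
  next
    case (Suc i)
    with jl have "Suc i < l - 1" "l - 1 < length (b # w)"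
      "(b # w) ! i < (b # w) ! Suc i" "(b # w) ! Suc i < (b # w) ! (l - 1)"
      by (auto simp: nth_Cons split: nat.splits)
    then show ?thesis unfolding contains_vinc_12_3_iff by blast
  qed
next
  assume "a < b \<and> (\<exists>x\<in>set w. b < x) \<or> contains_vinc (b # w) pat_12_3"
  then show "contains_vinc (a # b # w) pat_12_3"
  proof
    assume "a < b \<and> (\<exists>x\<in>set w. b < x)"
    then obtain k where "a < b" "k < length w" "b < w ! k"
      by (auto simp: in_set_conv_nth)
    then show ?thesis
      unfolding contains_vinc_12_3_iff by (intro exI[of _ 0] exI[of _ "Suc (Suc k)"]) auto
  next
    assume "contains_vinc (b # w) pat_12_3"
    then obtain j l where "Suc j < l" "l < length (b # w)"
      "(b # w) ! j < (b # w) ! Suc j" "(b # w) ! Suc j < (b # w) ! l"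
      unfolding contains_vinc_12_3_iff by blast
    then show ?thesis
      unfolding contains_vinc_12_3_iff by (intro exI[of _ "Suc j"] exI[of _ "Suc l"]) auto
  qed
qed

lemma west_s_eq: "west_s w = sc_aux sorted w []"
  unfolding west_s_def SC_def contains_vinc_21_iff_not_sorted by simp

lemma SC_12_3_4132: "SC pat_12_3 [4, 1, 3, 2] = [3, 2, 1, 4]"
  by (simp add: SC_def contains_vinc_12_3_Cons_Cons not_contains_vinc_12_3_singleton)

lemma SC_12_3_132: "SC pat_12_3 [1, 3, 2] = [2, 3, 1]"
  by (simp add: SC_def contains_vinc_12_3_Cons_Cons not_contains_vinc_12_3_singleton)

lemma west_s_3214: "west_s [3, 2, 1, 4] = [1, 2, 3, 4]"
  by (simp add: west_s_eq)

lemma west_s_231: "west_s [2, 3, 1] = [2, 1, 3]"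
  by (simp add: west_s_eq)

lemma length_perms: "\<tau> \<in> perms n \<Longrightarrow> length \<tau> = n"
  by (simp add: perms_def)

lemma mem_Sort_iff:
  "\<tau> \<in> Sort \<sigma> \<longleftrightarrow>
     1 \<le> length \<tau> \<and> \<tau> \<in> perms (length \<tau>) \<and> west_s (SC \<sigma> \<tau>) = [1..<Suc (length \<tau>)]"
  by (auto simp: Sort_def Sort_n_def length_perms)

lemma contains_4132_132: "contains [4, 1, 3, 2] [1, 3, 2]"
  unfolding contains_def contains_vinc_def
  by (auto intro!: exI[of _ "[1, 2, 3]"] simp: order_iso_def All_less_Suc numeral_eq_Suc)

theorem mainTheorem19:
  shows "\<not> perm_class (Sort pat_12_3)"
proof
  assume "perm_class (Sort pat_12_3)"
  moreover have "[4, 1, 3, 2] \<in> Sort pat_12_3"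
    unfolding mem_Sort_iff SC_12_3_4132 west_s_3214
    by (simp add: perms_def numeral_eq_Suc atLeastAtMostSuc_conv insert_commute)
  moreover have "[1, 3, 2] \<in> perms 3"
    by (auto simp: perms_def)
  ultimately have "[1, 3, 2] \<in> Sort pat_12_3"
    using contains_4132_132 unfolding perm_class_def by (metis one_le_numeral)
  then show False
    unfolding mem_Sort_iff SC_12_3_132 west_s_231 by simp
qed

end
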